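(* Let $\boldsymbol{A}$ be the adjacency matrix of an undirected graph without self-loops on a finite vertex set $\boldsymbol{V}=\{1,\dots,N\}$. Let $\mathcal{R}_e\subset\boldsymbol{V}$ be a nonempty set of egos, $n_e=|\mathcal{R}_e|$, and $\mathcal{R}_a\subset\boldsymbol{V}\setminus\mathcal{R}_e$ a nonempty set of alters, $n_a=|\mathcal{R}_a|$, where each alter $j\in\mathcal{R}_a$ has a unique recruiting ego $e(j)\in\mathcal{R}_e$ with $A_{j\,e(j)}=1$. Let $\widetilde{\boldsymbol{A}}$ be the observed adjacency matrix, with $\widetilde A_{ij}=\widetilde A_{ji}=1$ if and only if $i\in\mathcal{R}_a$ and $j=e(i)$ (and all other entries $0$). Let the treatment vector $\boldsymbol{Z}\in\{0,1\}^N$ have independent components with $\Pr(Z_i=1)=p_z\,\mathbb{I}\{i\in\mathcal{R}_e\}$ for a known $p_z\in(0,1)$. Define the true and observed exposures $F_i=\mathbb{I}\{\sum_{j\neq i}Z_jA_{ij}>0\}$ and $\widetilde F_i=\mathbb{I}\{\sum_{j\neq i}Z_j\widetilde A_{ij}>0\}$. Each unit $i\in\mathcal{R}_e\cup\mathcal{R}_a$ has fixed (non-random) real potential outcomes $Y_i(z,f)$, $z,f\in\{0,1\}$, and observed outcome $Y_i=\sum_{z,f\in\{0,1\}}Y_i(z,f)\mathbb{I}\{Z_i=z,F_i=f\}$. Define $$IE=\frac1{n_a}\sum_{i\in\mathcal{R}_a}[Y_i(0,1)-Y_i(0,0)],\qquad DE=\frac1{n_e}\sum_{i\in\mathcal{R}_e}[Y_i(1,0)-Y_i(0,0)],$$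 $$\widehat{IE}=\frac1{n_a}\sum_{i\in\mathcal{R}_a}\Big[\frac{\mathbb{I}\{\widetilde F_i=1\}Y_i}{p_z}-\frac{\mathbb{I}\{\widetilde F_i=0\}Y_i}{1-p_z}\Big],\qquad \widehat{DE}=\frac1{n_e}\sum_{i\in\mathcal{R}_e}\Big[\frac{\mathbb{I}\{Z_i=1\}Y_i}{p_z}-\frac{\mathbb{I}\{Z_i=0\}Y_i}{1-p_z}\Big].$$ For $i\in\mathcal{R}_a$ let $\pi_i^a=\Pr(F_i=1)$ and for $i\in\mathcal{R}_e$ let $\pi_i^e=\Pr(F_i=1)$, probabilities taken over $\boldsymbol{Z}$. Then, with expectations over $\boldsymbol{Z}$, $$\mathbb{E}_{\boldsymbol{Z}}[\widehat{IE}]=IE+\frac1{n_a}\sum_{i\in\mathcal{R}_a}\frac{p_z-\pi_i^a}{1-p_z}\,[Y_i(0,1)-Y_i(0,0)],$$ $$\mathbb{E}_{\boldsymbol{Z}}[\widehat{DE}]=DE+\frac1{n_e}\sum_{i\in\mathcal{R}_e}\pi_i^e\Big\{[Y_i(1,1)-Y_i(0,1)]-[Y_i(1,0)-Y_i(0,0)]\Big\}.$$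
   Context: Design-based setting: the network $\boldsymbol{A}$, the sampled sets $\mathcal{R}_e,\mathcal{R}_a$, the recruitment map $e(\cdot)$ and the potential outcomes are all fixed; the only randomness is the treatment assignment $\boldsymbol{Z}$ (all probabilities and expectations are over $\boldsymbol{Z}$, conditional on the sample). The observed network consists of disjoint ego-networks (each ego with the alters it recruited), while the true network $\boldsymbol{A}$ may contain additional ego–ego and alter–ego edges. *)

theory Defs
  imports "HOL-Probability.Probability"
begin

text \<open>Vertices are V = {1..N}; matrices are real-valued functions nat => nat => real.
  A treatment assignment is a function z :: nat => bool (z i means Z_i = 1),
  equal to False outside V.\<close>

definition vertices :: "nat \<Rightarrow> nat set" where
  "vertices N = {1..N}"

definition simple_adj :: "nat \<Rightarrow> (nat \<Rightarrow> nat \<Rightarrow> real) \<Rightarrow> bool" where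
  "simple_adj N A \<longleftrightarrow> (\<forall>i\<in>vertices N. \<forall>j\<in>vertices N.
      A i j \<in> {0, 1} \<and> A i j = A j i) \<and> (\<forall>i\<in>vertices N. A i i = 0)"

definition obs_adj :: "nat set \<Rightarrow> (nat \<Rightarrow> nat) \<Rightarrow> nat \<Rightarrow> nat \<Rightarrow> real" where
  "obs_adj Ralt e i j = (if (i \<in> Ralt \<and> j = e i) \<or> (j \<in> Ralt \<and> i = e j) then 1 else 0)"

definition Zdist :: "nat \<Rightarrow> nat set \<Rightarrow> real \<Rightarrow> (nat \<Rightarrow> bool) pmf" where
  "Zdist N Rego p = Pi_pmf (vertices N) False (\<lambda>i. bernoulli_pmf (if i \<in> Rego then p else 0))"

definition exposure :: "nat \<Rightarrow> (nat \<Rightarrow> nat \<Rightarrow> real) \<Rightarrow> (nat \<Rightarrow> bool) \<Rightarrow> nat \<Rightarrow> nat" where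
  "exposure N A z i =
     (if (\<Sum>j\<in>vertices N - {i}. of_bool (z j) * A i j) > 0 then 1 else 0)"

definition obs_outcome ::
  "nat \<Rightarrow> (nat \<Rightarrow> nat \<Rightarrow> real) \<Rightarrow> (nat \<Rightarrow> nat \<Rightarrow> nat \<Rightarrow> real) \<Rightarrow> (nat \<Rightarrow> bool) \<Rightarrow> nat \<Rightarrow> real" where
  "obs_outcome N A Y z i =
     (\<Sum>zz\<in>{0,1::nat}. \<Sum>ff\<in>{0,1::nat}.
        Y i zz ff * of_bool (of_bool (z i) = zz \<and> exposure N A z i = ff))"

definition IE :: "nat set \<Rightarrow> (nat \<Rightarrow> nat \<Rightarrow> nat \<Rightarrow> real) \<Rightarrow> real" where
  "IE Ralt Y = (1 / real (card Ralt)) * (\<Sum>i\<in>Ralt. Y i 0 1 - Y i 0 0)"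

definition DE :: "nat set \<Rightarrow> (nat \<Rightarrow> nat \<Rightarrow> nat \<Rightarrow> real) \<Rightarrow> real" where
  "DE Rego Y = (1 / real (card Rego)) * (\<Sum>i\<in>Rego. Y i 1 0 - Y i 0 0)"

definition IE_hat ::
  "nat \<Rightarrow> (nat \<Rightarrow> nat \<Rightarrow> real) \<Rightarrow> nat set \<Rightarrow> (nat \<Rightarrow> nat) \<Rightarrow> real
   \<Rightarrow> (nat \<Rightarrow> nat \<Rightarrow> nat \<Rightarrow> real) \<Rightarrow> (nat \<Rightarrow> bool) \<Rightarrow> real" where
  "IE_hat N A Ralt e p Y z = (1 / real (card Ralt)) *
     (\<Sum>i\<in>Ralt. of_bool (exposure N (obs_adj Ralt e) z i = 1) * obs_outcome N A Y z i / p
             - of_bool (exposure N (obs_adj Ralt e) z i = 0) * obs_outcome N A Y z i / (1 - p))"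

definition DE_hat ::
  "nat \<Rightarrow> (nat \<Rightarrow> nat \<Rightarrow> real) \<Rightarrow> nat set \<Rightarrow> real
   \<Rightarrow> (nat \<Rightarrow> nat \<Rightarrow> nat \<Rightarrow> real) \<Rightarrow> (nat \<Rightarrow> bool) \<Rightarrow> real" where
  "DE_hat N A Rego p Y z = (1 / real (card Rego)) *
     (\<Sum>i\<in>Rego. of_bool (z i) * obs_outcome N A Y z i / p
             - of_bool (\<not> z i) * obs_outcome N A Y z i / (1 - p))"

end

theory Submission
  imports Defs
begin

text \<open>
  Under the Bernoulli design the treatment Z_i of a unit is independent of its true exposure
  F_i, which only depends on the other coordinates of Z. For an ego the inverse-probability
  contrast therefore averages Y_i(1,F_i) - Y_i(0,F_i) over the law of F_i, which produces the
  interaction bias. An alter is never treated and its observed exposure is Z_e(i); as e(i) is a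
  true neighbour, Z_e(i) = 1 forces F_i = 1. So the joint law of (Z_e(i), F_i) is fixed by p and
  Pr(F_i = 1), and the bias of the indirect effect comes from the event Z_e(i) = 0, F_i = 1 of
  alters exposed only through unobserved edges.
\<close>

text \<open>Unlike the library lemma measure_pmf_prob_product, this needs no countability
  assumption: only the (countable) supports matter.\<close>
lemma measure_pair_pmf_Times:
  "measure_pmf.prob (pair_pmf M N) (A \<times> B) = measure_pmf.prob M A * measure_pmf.prob N B"
proof -
  have "(A \<times> B) \<inter> set_pmf (pair_pmf M N) = (A \<inter> set_pmf M) \<times> (B \<inter> set_pmf N)"
    by auto
  then have "measure_pmf.prob (pair_pmf M N) (A \<times> B)
      = measure_pmf.prob (pair_pmf M N) ((A \<inter> set_pmf M) \<times> (B \<inter> set_pmf N))"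
    by (metis measure_Int_set_pmf)
  also have "\<dots> = measure_pmf.prob M (A \<inter> set_pmf M) * measure_pmf.prob N (B \<inter> set_pmf N)"
    by (rule measure_pmf_prob_product) auto
  finally show ?thesis
    by (simp add: measure_Int_set_pmf)
qed

lemma measure_Pi_pmf_coordinate_indep:
  assumes "finite I" "i \<in> I" "\<And>z y. Q (z(i := y)) = Q z"
  shows "measure_pmf.prob (Pi_pmf I d P) {z. R (z i) \<and> Q z}
       = measure_pmf.prob (P i) {y. R y} * measure_pmf.prob (Pi_pmf I d P) {z. Q z}"
proof -
  let ?upd = "\<lambda>(y, z). z(i := y)" and ?rest = "Pi_pmf (I - {i}) d P"
  have split: "Pi_pmf I d P = map_pmf ?upd (pair_pmf (P i) ?rest)"
    using assms(1,2) Pi_pmf_insert[of "I - {i}" i d P] by (simp add: insert_absorb)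
  have "?upd -` {z. R (z i) \<and> Q z} = {y. R y} \<times> {z. Q z}"
       "?upd -` {z. Q z} = UNIV \<times> {z. Q z}"
    using assms(3) by auto
  then show ?thesis
    unfolding split measure_map_pmf by (simp add: measure_pair_pmf_Times)
qed

lemma expectation_finite_range:
  fixes g :: "'b \<Rightarrow> real"
  assumes "finite S" "\<And>z. z \<in> set_pmf M \<Longrightarrow> h z \<in> S"
  shows "measure_pmf.expectation M (\<lambda>z. g (h z))
    = (\<Sum>v\<in>S. g v * measure_pmf.prob M {z. h z = v})"
proof -
  have "measure_pmf.expectation M (\<lambda>z. g (h z)) = measure_pmf.expectation (map_pmf h M) g"
    by simp
  also have "\<dots> = (\<Sum>v\<in>S. g v * pmf (map_pmf h M) v)"
    using assms by (intro integral_measure_pmf_real) auto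
  finally show ?thesis
    by (simp add: pmf_map vimage_def)
qed

lemma finite_set_pmf_Zdist: "finite (set_pmf (Zdist N R p))"
  unfolding Zdist_def by (subst set_Pi_pmf) (auto simp: vertices_def)

lemma prob_Zdist_treatment_indep:
  assumes "i \<in> vertices N" "i \<in> R" "0 \<le> p" "p \<le> 1" "\<And>z y. Q (z(i := y)) = Q z"
  shows "measure_pmf.prob (Zdist N R p) {z. z i = b \<and> Q z}
       = (if b then p else 1 - p) * measure_pmf.prob (Zdist N R p) {z. Q z}"
proof -
  have "measure_pmf.prob (bernoulli_pmf p) {y. y = b} = (if b then p else 1 - p)"
    using assms(3,4) by (simp add: measure_pmf_single)
  then show ?thesis
    using assms unfolding Zdist_def
    by (subst measure_Pi_pmf_coordinate_indep) (auto simp: vertices_def)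
qed

lemma prob_Zdist_treated:
  assumes "i \<in> vertices N" "i \<in> R" "0 \<le> p" "p \<le> 1"
  shows "measure_pmf.prob (Zdist N R p) {z. z i} = p"
  using prob_Zdist_treatment_indep[OF assms, of "\<lambda>_. True" True] by simp

lemma Zdist_untreated:
  assumes "i \<notin> R" "z \<in> set_pmf (Zdist N R p)"
  shows "\<not> z i"
proof -
  have "z i \<in> set_pmf (map_pmf (\<lambda>z. z i) (Zdist N R p))"
    using assms(2) by simp
  also have "map_pmf (\<lambda>z. z i) (Zdist N R p)
      = (if i \<in> vertices N then bernoulli_pmf 0 else return_pmf False)"
    using assms(1) unfolding Zdist_def by (simp add: Pi_pmf_component vertices_def)
  finally show ?thesis
    by (auto simp: set_pmf_iff split: if_splits)
qed

lemma exposure_in_01: "exposure N A z i \<in> {0, 1}"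
  by (simp add: exposure_def)

lemma prob_exposure_0:
  "measure_pmf.prob M {z. exposure N A z i = 0} = 1 - measure_pmf.prob M {z. exposure N A z i = 1}"
proof -
  have "{z. exposure N A z i = 0} = space (measure_pmf M) - {z. exposure N A z i = 1}"
    using exposure_in_01[of N A _ i] by auto
  then show ?thesis
    by (simp only:) (rule measure_pmf.prob_compl, simp)
qed

lemma exposure_fun_upd_self: "exposure N A (z(i := b)) i = exposure N A z i"
  unfolding exposure_def by (auto intro!: sum.cong)

lemma exposure_if_treated_neighbour:
  assumes "simple_adj N A" "i \<in> vertices N" "j \<in> vertices N - {i}" "A i j = 1" "z j"
  shows "exposure N A z i = 1"
proof -
  have "\<forall>k\<in>vertices N - {i}. 0 \<le> of_bool (z k) * A i k"
    using assms(1,2) unfolding simple_adj_def by fastforce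
  then have "of_bool (z j) * A i j \<le> (\<Sum>k\<in>vertices N - {i}. of_bool (z k) * A i k)"
    using assms(3) by (intro member_le_sum) (auto simp: vertices_def)
  then show ?thesis
    using assms(4,5) by (simp add: exposure_def)
qed

lemma exposure_obs_adj_alter:
  assumes "i \<in> Ralt" "i \<notin> e ` Ralt" "e i \<in> vertices N - {i}"
  shows "exposure N (obs_adj Ralt e) z i = of_bool (z (e i))"
proof -
  have "(\<Sum>j\<in>vertices N - {i}. of_bool (z j) * obs_adj Ralt e i j)
      = (\<Sum>j\<in>vertices N - {i}. if j = e i then of_bool (z (e i)) else 0)"
    using assms(1,2) by (intro sum.cong) (auto simp: obs_adj_def)
  also have "\<dots> = of_bool (z (e i))"
    using assms(3) by (simp add: vertices_def)
  finally show ?thesis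
    by (simp add: exposure_def)
qed

lemma obs_outcome_eq: "obs_outcome N A Y z i = Y i (of_bool (z i)) (exposure N A z i)"
  using exposure_in_01[of N A z i] by (auto simp: obs_outcome_def)

lemma expectation_ego_term:
  assumes i: "i \<in> vertices N" "i \<in> R" and p: "0 < p" "p < 1"
  shows "measure_pmf.expectation (Zdist N R p)
      (\<lambda>z. of_bool (z i) * obs_outcome N A Y z i / p
         - of_bool (\<not> z i) * obs_outcome N A Y z i / (1 - p))
    = (Y i 1 0 - Y i 0 0) + measure_pmf.prob (Zdist N R p) {z. exposure N A z i = 1}
        * ((Y i 1 1 - Y i 0 1) - (Y i 1 0 - Y i 0 0))"
proof -
  let ?M = "Zdist N R p" and ?F = "\<lambda>z. exposure N A z i"
  define g where "g = (\<lambda>(b, f).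
    of_bool b * Y i (of_bool b) f / p - of_bool (\<not> b) * Y i (of_bool b) f / (1 - p))"
  have weighted: "g (b, f) * measure_pmf.prob ?M {z. (z i, ?F z) = (b, f)}
      = (if b then Y i 1 f else - Y i 0 f) * measure_pmf.prob ?M {z. ?F z = f}" for b f
  proof -
    have "measure_pmf.prob ?M {z. (z i, ?F z) = (b, f)}
        = (if b then p else 1 - p) * measure_pmf.prob ?M {z. ?F z = f}"
      using prob_Zdist_treatment_indep[OF i, where Q = "\<lambda>z. ?F z = f" and b = b] p
      by (simp add: exposure_fun_upd_self)
    then show ?thesis
      using p by (simp add: g_def)
  qed
  have "measure_pmf.expectation ?M
      (\<lambda>z. of_bool (z i) * obs_outcome N A Y z i / p
         - of_bool (\<not> z i) * obs_outcome N A Y z i / (1 - p))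
    = measure_pmf.expectation ?M (\<lambda>z. g (z i, ?F z))"
    by (simp add: g_def obs_outcome_eq)
  also have "\<dots> = (\<Sum>v\<in>UNIV \<times> {0, 1}. g v * measure_pmf.prob ?M {z. (z i, ?F z) = v})"
    by (rule expectation_finite_range) (auto simp: exposure_def)
  also have "\<dots> = (\<Sum>f\<in>{0, 1}. (Y i 1 f - Y i 0 f) * measure_pmf.prob ?M {z. ?F z = f})"
    unfolding sum.cartesian_product' weighted by (simp add: UNIV_bool algebra_simps)
  also have "\<dots> = (Y i 1 0 - Y i 0 0)
      + measure_pmf.prob ?M {z. ?F z = 1} * ((Y i 1 1 - Y i 0 1) - (Y i 1 0 - Y i 0 0))"
    by (simp add: prob_exposure_0 algebra_simps)
  finally show ?thesis .
qed

lemma expectation_alter_term: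
  assumes adj: "simple_adj N A" and i: "i \<in> Ralt" and Ralt: "Ralt \<subseteq> vertices N - R"
    and rec: "\<forall>j\<in>Ralt. e j \<in> R \<and> A j (e j) = 1" and R: "R \<subseteq> vertices N"
    and p: "0 < p" "p < 1"
  shows "measure_pmf.expectation (Zdist N R p)
      (\<lambda>z. of_bool (exposure N (obs_adj Ralt e) z i = 1) * obs_outcome N A Y z i / p
         - of_bool (exposure N (obs_adj Ralt e) z i = 0) * obs_outcome N A Y z i / (1 - p))
    = (Y i 0 1 - Y i 0 0) + (p - measure_pmf.prob (Zdist N R p) {z. exposure N A z i = 1}) / (1 - p)
        * (Y i 0 1 - Y i 0 0)"
proof -
  let ?M = "Zdist N R p" and ?F = "\<lambda>z. exposure N A z i"
  let ?\<pi> = "measure_pmf.prob ?M {z. ?F z = 1}"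
  have iV: "i \<in> vertices N" "i \<notin> R"
    using i Ralt by auto
  have eR: "e i \<in> R" "A i (e i) = 1"
    using rec i by auto
  have eV: "e i \<in> vertices N - {i}"
    using eR R iV by auto
  have not_ego: "i \<notin> e ` Ralt"
    using rec iV(2) by auto
  have observed: "exposure N (obs_adj Ralt e) z i = of_bool (z (e i))" for z
    using exposure_obs_adj_alter[OF i not_ego eV] .
  have exposed: "?F z = 1" if "z (e i)" for z
    using adj iV(1) eV eR(2) that by (rule exposure_if_treated_neighbour)
  define g where "g = (\<lambda>(b, f). of_bool b * Y i 0 f / p - of_bool (\<not> b) * Y i 0 f / (1 - p))"
  have "measure_pmf.expectation ?M
      (\<lambda>z. of_bool (exposure N (obs_adj Ralt e) z i = 1) * obs_outcome N A Y z i / p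
         - of_bool (exposure N (obs_adj Ralt e) z i = 0) * obs_outcome N A Y z i / (1 - p))
    = measure_pmf.expectation ?M (\<lambda>z. g (z (e i), ?F z))"
    by (intro integral_cong_AE AE_pmfI)
       (auto simp: observed obs_outcome_eq g_def dest: Zdist_untreated[OF iV(2)])
  also have "\<dots> = (\<Sum>v\<in>UNIV \<times> {0, 1}. g v * measure_pmf.prob ?M {z. (z (e i), ?F z) = v})"
    by (rule expectation_finite_range) (auto simp: exposure_def)
  also have "\<dots> = g (True, 1) * p + g (False, 0) * (1 - ?\<pi>) + g (False, 1) * (?\<pi> - p)"
  proof -
    have treated: "measure_pmf.prob ?M {z. z (e i)} = p"
      using prob_Zdist_treated[of "e i" N R p] eV eR(1) p by simp
    have "{z. z (e i)} \<subseteq> {z. ?F z = 1}"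
      using exposed by blast
    then have diff: "measure_pmf.prob ?M ({z. ?F z = 1} - {z. z (e i)}) = ?\<pi> - p"
      using treated by (simp add: measure_pmf.finite_measure_Diff)
    have joint: "{z. z (e i) \<and> ?F z = 0} = {}" "{z. z (e i) \<and> ?F z = 1} = {z. z (e i)}"
      "{z. \<not> z (e i) \<and> ?F z = 0} = {z. ?F z = 0}"
      "{z. \<not> z (e i) \<and> ?F z = 1} = {z. ?F z = 1} - {z. z (e i)}"
      by (auto dest: exposed)
    have "measure_pmf.prob ?M {z. z (e i) \<and> ?F z = 0} = 0"
      "measure_pmf.prob ?M {z. z (e i) \<and> ?F z = 1} = p"
      "measure_pmf.prob ?M {z. \<not> z (e i) \<and> ?F z = 0} = 1 - ?\<pi>"
      "measure_pmf.prob ?M {z. \<not> z (e i) \<and> ?F z = 1} = ?\<pi> - p"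
      unfolding joint using treated diff prob_exposure_0[of ?M N A i] by simp_all
    then show ?thesis
      by (simp add: sum.cartesian_product' UNIV_bool)
  qed
  also have "\<dots> = (Y i 0 1 - Y i 0 0) + (p - ?\<pi>) / (1 - p) * (Y i 0 1 - Y i 0 0)"
  proof -
    have "1 - p \<noteq> 0"
      using p by simp
    then show ?thesis
      using p by (simp add: g_def divide_simps) (simp add: algebra_simps)
  qed
  finally show ?thesis .
qed

lemma expectation_Zdist_scaled_sum:
  fixes f :: "'i \<Rightarrow> (nat \<Rightarrow> bool) \<Rightarrow> real"
  shows "measure_pmf.expectation (Zdist N R p) (\<lambda>z. c * (\<Sum>i\<in>I. f i z))
     = c * (\<Sum>i\<in>I. measure_pmf.expectation (Zdist N R p) (f i))"
proof -
  have "integrable (measure_pmf (Zdist N R p)) g" for g :: "(nat \<Rightarrow> bool) \<Rightarrow> real"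
    by (rule integrable_measure_pmf_finite[OF finite_set_pmf_Zdist])
  then show ?thesis
    by (simp add: Bochner_Integration.integral_sum)
qed

theorem proposition1:
  fixes N :: nat and A :: "nat \<Rightarrow> nat \<Rightarrow> real" and Rego Ralt :: "nat set"
    and e :: "nat \<Rightarrow> nat" and p :: real and Y :: "nat \<Rightarrow> nat \<Rightarrow> nat \<Rightarrow> real"
  assumes adj: "simple_adj N A"
    and Rego: "Rego \<subseteq> vertices N" "Rego \<noteq> {}"
    and Ralt: "Ralt \<subseteq> vertices N - Rego" "Ralt \<noteq> {}"
    and rec: "\<forall>j\<in>Ralt. e j \<in> Rego \<and> A j (e j) = 1"
    and p: "0 < p" "p < 1"
  shows "measure_pmf.expectation (Zdist N Rego p) (IE_hat N A Ralt e p Y)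
           = IE Ralt Y + (1 / real (card Ralt)) *
               (\<Sum>i\<in>Ralt. (p - measure_pmf.prob (Zdist N Rego p) {z. exposure N A z i = 1}) / (1 - p)
                         * (Y i 0 1 - Y i 0 0))
       \<and> measure_pmf.expectation (Zdist N Rego p) (DE_hat N A Rego p Y)
           = DE Rego Y + (1 / real (card Rego)) *
               (\<Sum>i\<in>Rego. measure_pmf.prob (Zdist N Rego p) {z. exposure N A z i = 1}
                         * ((Y i 1 1 - Y i 0 1) - (Y i 1 0 - Y i 0 0)))"
proof
  let ?\<pi> = "\<lambda>i. measure_pmf.prob (Zdist N Rego p) {z. exposure N A z i = 1}"
  have "measure_pmf.expectation (Zdist N Rego p) (IE_hat N A Ralt e p Y)
      = (1 / real (card Ralt))
        * (\<Sum>i\<in>Ralt. (Y i 0 1 - Y i 0 0) + (p - ?\<pi> i) / (1 - p) * (Y i 0 1 - Y i 0 0))"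
    unfolding IE_hat_def[abs_def] expectation_Zdist_scaled_sum
    by (intro arg_cong[where f = "\<lambda>s. _ * s"] sum.cong refl
        expectation_alter_term[OF adj _ Ralt(1) rec Rego(1) p])
  then show "measure_pmf.expectation (Zdist N Rego p) (IE_hat N A Ralt e p Y)
      = IE Ralt Y
        + (1 / real (card Ralt)) * (\<Sum>i\<in>Ralt. (p - ?\<pi> i) / (1 - p) * (Y i 0 1 - Y i 0 0))"
    by (simp add: IE_def sum.distrib distrib_left)
next
  let ?\<pi> = "\<lambda>i. measure_pmf.prob (Zdist N Rego p) {z. exposure N A z i = 1}"
  have "measure_pmf.expectation (Zdist N Rego p) (DE_hat N A Rego p Y)
      = (1 / real (card Rego))
        * (\<Sum>i\<in>Rego. (Y i 1 0 - Y i 0 0) + ?\<pi> i * ((Y i 1 1 - Y i 0 1) - (Y i 1 0 - Y i 0 0)))"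
    unfolding DE_hat_def[abs_def] expectation_Zdist_scaled_sum
    by (intro arg_cong[where f = "\<lambda>s. _ * s"] sum.cong refl expectation_ego_term p) (use Rego(1) in auto)
  then show "measure_pmf.expectation (Zdist N Rego p) (DE_hat N A Rego p Y)
      = DE Rego Y
        + (1 / real (card Rego)) * (\<Sum>i\<in>Rego. ?\<pi> i * ((Y i 1 1 - Y i 0 1) - (Y i 1 0 - Y i 0 0)))"
    by (simp add: DE_def sum.distrib distrib_left)
qed

end
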